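(* Let $\mathbf{f}=\{f_1,\dots,f_m\}$ be an $m$-objective problem ($m\ge2$, not necessarily simple) whose Pareto front $\mathbf{f}X^*(\mathbf{f})$ is a topological $(m-1)$-manifold (possibly with boundary). Let $y\in\operatorname{Int}\mathbf{f}X^*(\mathbf{f})$. Then for every neighborhood $U\subseteq\mathbf{f}X^*(\mathbf{f})$ of $y$ and every $\mathbf{g}$ with $\emptyset\subsetneq\mathbf{g}\subsetneq\mathbf{f}$, there exists a point $v\in U$ such that $v$ $\mathbf{g}$-dominates $y$ and $y$ $(\mathbf{f}\setminus\mathbf{g})$-dominates $v$.
   Context: A problem is a finite set $\mathbf{f}=\{f_1,\dots,f_m\}$ of functions $f_i:\mathbb{R}^n\to\mathbb{R}$ together with a feasible region $X\subseteq\mathbb{R}^n$, to be minimized simultaneously; its evaluation map is $x\mapsto(f_1(x),\dots,f_m(x))$. The Pareto set $X^*(\mathbf{f})$ is the set of $x^*\in X$ for which there is no $x\in X$ with $f_i(x)\le f_i(x^* )$ for all $i$ and $f_j(x)<f_j(x^* )$ for some $j$; the Pareto front $\mathbf{f}X^*(\mathbf{f})\subseteq\mathbb{R}^m$ is its image, with the subspace topology. For points $u,v\in\mathbb{R}^m$ and a subset $\mathbf{g}\subseteq\mathbf{f}$, $u$ $\mathbf{g}$-dominates $v$ if $u_i\le v_i$ for all $i$ with $f_i\in\mathbf{g}$ and $u_j<v_j$ for some $j$ with $f_j\in\mathbf{g}$. For a topological manifold with boundary $M$, $\operatorname{Int}M$ denotes its manifold interior. *)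

theory Defs
  imports "HOL-Analysis.Analysis"
begin

definition evalmap :: "('m::finite \<Rightarrow> real^'n \<Rightarrow> real) \<Rightarrow> real^'n \<Rightarrow> real^'m" where
  "evalmap f x = (\<chi> i. f i x)"

definition dominates_on :: "'m set \<Rightarrow> real^'m \<Rightarrow> real^'m \<Rightarrow> bool" where
  "dominates_on G u v \<longleftrightarrow> (\<forall>i\<in>G. u $ i \<le> v $ i) \<and> (\<exists>j\<in>G. u $ j < v $ j)"

definition pareto_set :: "('m::finite \<Rightarrow> real^'n \<Rightarrow> real) \<Rightarrow> (real^'n) set \<Rightarrow> (real^'n) set" where
  "pareto_set f X = {xs \<in> X. \<not> (\<exists>x\<in>X. (\<forall>i. f i x \<le> f i xs) \<and> (\<exists>j. f j x < f j xs))}"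

definition pareto_front :: "('m::finite \<Rightarrow> real^'n \<Rightarrow> real) \<Rightarrow> (real^'n) set \<Rightarrow> (real^'m) set" where
  "pareto_front f X = evalmap f ` pareto_set f X"

text \<open>S (with the subspace topology) is a topological manifold with boundary of dimension
  CARD('k): every point has an open neighbourhood in S homeomorphic to a relatively open
  subset of a closed half-space of real^'k. (Hausdorff and second countability are
  automatic for subspaces of real^'m.)\<close>
definition top_manifold_bdry :: "'k::finite itself \<Rightarrow> (real^'m) set \<Rightarrow> bool" where
  "top_manifold_bdry _ S \<longleftrightarrow>
     (\<forall>p\<in>S. \<exists>U (V :: (real^'k) set) c. openin (top_of_set S) U \<and> p \<in> U \<and>
        openin (top_of_set {x. 0 \<le> x $ c}) V \<and> U homeomorphic V)"

definition manifold_interior :: "'k::finite itself \<Rightarrow> (real^'m) set \<Rightarrow> (real^'m) set" where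
  "manifold_interior _ S = {p \<in> S. \<exists>U (V :: (real^'k) set). openin (top_of_set S) U \<and> p \<in> U \<and>
        open V \<and> U homeomorphic V}"

end

theory Submission
  imports Defs
begin

text \<open>Distinct points of a Pareto front are incomparable, so the front meets every line
  parallel to the diagonal at most once: projecting along the diagonal onto real^(m-1) is
  injective on the front. Near a manifold-interior point y this projection is, by invariance of
  domain, an open map, so y has nearby front points whose projection is moved by a small
  t > 0 in exactly the coordinates outside G. Such a point differs from y by D in the
  coordinates in G and by D + t in the others, and incomparability with y forces
  D < 0 < D + t, which are the two dominance relations.\<close>

lemma pareto_front_ex_less:
  assumes a: "a \<in> pareto_front f X" and b: "b \<in> pareto_front f X" and "a \<noteq> b"
  shows "\<exists>i. a $ i < b $ i"
proof (rule ccontr)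
  assume "\<nexists>i. a $ i < b $ i"
  hence le: "\<forall>i. b $ i \<le> a $ i" by (simp add: not_less)
  with \<open>a \<noteq> b\<close> have "\<exists>j. b $ j < a $ j" by (metis order.not_eq_order_implies_strict vec_eq_iff)
  moreover obtain xa where "xa \<in> pareto_set f X" "a = evalmap f xa"
    using a unfolding pareto_front_def by auto
  moreover obtain xb where "xb \<in> pareto_set f X" "b = evalmap f xb"
    using b unfolding pareto_front_def by auto
  ultimately show False
    using le unfolding pareto_set_def evalmap_def by auto
qed

lemma pareto_front_diagonal_shift_dominates:
  assumes y: "y \<in> pareto_front f X" and v: "v \<in> pareto_front f X"
    and "t > 0" and i\<^sub>0: "i\<^sub>0 \<in> G" and i\<^sub>1: "i\<^sub>1 \<notin> G"
    and shift: "\<And>i. v $ i = y $ i + D + (if i \<in> G then 0 else t)"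
  shows "dominates_on G v y \<and> dominates_on (UNIV - G) y v"
proof -
  have "v \<noteq> y" using shift[of i\<^sub>0] shift[of i\<^sub>1] i\<^sub>0 i\<^sub>1 \<open>t > 0\<close> by auto
  obtain i where "v $ i < y $ i" using pareto_front_ex_less[OF v y \<open>v \<noteq> y\<close>] ..
  hence "D < 0" using shift[of i] \<open>t > 0\<close> by (auto split: if_splits)
  obtain j where "y $ j < v $ j" using pareto_front_ex_less[OF y v] \<open>v \<noteq> y\<close> by metis
  hence "D + t > 0" using shift[of j] \<open>D < 0\<close> by (auto split: if_splits)
  show ?thesis
    unfolding dominates_on_def using shift \<open>D < 0\<close> \<open>D + t > 0\<close> i\<^sub>0 i\<^sub>1 by force
qed

definition coords_mod_diagonal :: "('k \<Rightarrow> 'm) \<Rightarrow> 'm \<Rightarrow> real^'m \<Rightarrow> real^'k" where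
  "coords_mod_diagonal e i\<^sub>0 x = (\<chi> j. x $ e j - x $ i\<^sub>0)"

lemma continuous_on_coords_mod_diagonal: "continuous_on A (coords_mod_diagonal e i\<^sub>0)"
  unfolding coords_mod_diagonal_def by (intro continuous_intros)

lemma coords_mod_diagonal_shift:
  assumes e: "UNIV - {i\<^sub>0} \<subseteq> range e" and "\<delta> i\<^sub>0 = 0"
    and eq: "coords_mod_diagonal e i\<^sub>0 a = coords_mod_diagonal e i\<^sub>0 b + (\<chi> j. \<delta> (e j))"
  shows "a $ i - b $ i = a $ i\<^sub>0 - b $ i\<^sub>0 + \<delta> i"
proof (cases "i = i\<^sub>0")
  case False
  then obtain j where "i = e j" using e by auto
  moreover have "a $ e j - a $ i\<^sub>0 = b $ e j - b $ i\<^sub>0 + \<delta> (e j)"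
    using eq unfolding coords_mod_diagonal_def by (simp add: vec_eq_iff)
  ultimately show ?thesis by simp
qed (simp add: \<open>\<delta> i\<^sub>0 = 0\<close>)

lemma inj_on_coords_mod_diagonal_pareto_front:
  assumes "UNIV - {i\<^sub>0} \<subseteq> range e"
  shows "inj_on (coords_mod_diagonal e i\<^sub>0) (pareto_front f X)"
proof (rule inj_onI, rule ccontr)
  fix a b
  assume a: "a \<in> pareto_front f X" and b: "b \<in> pareto_front f X" and "a \<noteq> b"
    and eq: "coords_mod_diagonal e i\<^sub>0 a = coords_mod_diagonal e i\<^sub>0 b"
  have eq0: "coords_mod_diagonal e i\<^sub>0 a = coords_mod_diagonal e i\<^sub>0 b + (\<chi> j. 0)"
    using eq by (simp add: vec_eq_iff)
  have diff: "a $ i - b $ i = a $ i\<^sub>0 - b $ i\<^sub>0" for i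
    using coords_mod_diagonal_shift[where \<delta> = "\<lambda>_. 0", OF assms _ eq0] by simp
  obtain i where "a $ i < b $ i" using pareto_front_ex_less[OF a b \<open>a \<noteq> b\<close>] ..
  moreover obtain j where "b $ j < a $ j" using pareto_front_ex_less[OF b a] \<open>a \<noteq> b\<close> by metis
  ultimately show False using diff[of i] diff[of j] by linarith
qed

lemma manifold_interior_imp_interior_image:
  fixes \<psi> :: "real^'m \<Rightarrow> real^'k"
  assumes y: "y \<in> manifold_interior TYPE('k) S"
    and cont: "continuous_on S \<psi>" and inj: "inj_on \<psi> S"
    and W: "openin (top_of_set S) W" "y \<in> W"
  shows "\<psi> y \<in> interior (\<psi> ` W)"
proof -
  obtain U and V :: "(real^'k) set" and h g where U: "openin (top_of_set S) U" "y \<in> U"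
    and "open V" and hom: "homeomorphism U V h g"
    using y unfolding manifold_interior_def homeomorphic_def by auto
  have "U \<subseteq> S" using U(1) by (rule openin_imp_subset)
  define T where "T = V \<inter> g -` W"
  have "openin (top_of_set V) T"
    unfolding T_def using continuous_openin_preimage[OF homeomorphism_cont2[OF hom] _ W(1)]
      homeomorphism_image2[OF hom] \<open>U \<subseteq> S\<close> by auto
  hence "open T" using \<open>open V\<close> openin_open_trans by blast
  moreover have gT: "g ` T \<subseteq> U \<inter> W"
    unfolding T_def using homeomorphism_image2[OF hom] by auto
  moreover have "continuous_on T (\<psi> \<circ> g)"
    using homeomorphism_cont2[OF hom] continuous_on_subset[OF cont] gT \<open>U \<subseteq> S\<close>
    unfolding T_def by (intro continuous_on_compose) (auto elim: continuous_on_subset)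
  moreover have "inj_on (\<psi> \<circ> g) T"
    using inj_on_subset[OF inj] homeomorphism_apply2[OF hom] gT \<open>U \<subseteq> S\<close>
    unfolding T_def inj_on_def by (metis IntD1 Int_subset_iff comp_apply image_subset_iff)
  ultimately have "open ((\<psi> \<circ> g) ` T)" using invariance_of_domain by blast
  moreover have "\<psi> y \<in> (\<psi> \<circ> g) ` T"
    using homeomorphism_image1[OF hom] homeomorphism_apply1[OF hom U(2)] U(2) W(2)
    unfolding T_def by (metis IntI comp_apply image_eqI imageI vimageI)
  moreover have "(\<psi> \<circ> g) ` T \<subseteq> \<psi> ` W" using gT by auto
  ultimately show ?thesis by (meson interiorI)
qed

lemma interior_imp_ex_step:
  fixes x :: "'a::real_normed_vector"
  assumes "x \<in> interior A"
  obtains t where "t > 0" "x + t *\<^sub>R d \<in> A"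
proof -
  obtain \<epsilon> where "\<epsilon> > 0" "ball x \<epsilon> \<subseteq> A"
    using assms by (meson mem_interior)
  have "norm d + 1 > 0" by (simp add: add_nonneg_pos)
  define t where "t = \<epsilon> / (norm d + 1)"
  have "t > 0" unfolding t_def using \<open>\<epsilon> > 0\<close> \<open>norm d + 1 > 0\<close> by simp
  have "t * norm d < t * (norm d + 1)" using \<open>t > 0\<close> by simp
  also have "\<dots> = \<epsilon>" unfolding t_def using \<open>norm d + 1 > 0\<close> by simp
  finally have "x + t *\<^sub>R d \<in> ball x \<epsilon>" using \<open>t > 0\<close> by (simp add: dist_norm)
  with \<open>t > 0\<close> \<open>ball x \<epsilon> \<subseteq> A\<close> that show ?thesis by blast
qed

theorem lemma2:
  fixes f :: "'m::finite \<Rightarrow> real^'n \<Rightarrow> real"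
    and X :: "(real^'n) set"
    and y :: "real^'m"
  assumes m2: "CARD('m) \<ge> 2"
    and dim: "CARD('k::finite) + 1 = CARD('m)"
    and mfd: "top_manifold_bdry TYPE('k) (pareto_front f X)"
    and y: "y \<in> manifold_interior TYPE('k) (pareto_front f X)"
  shows "\<forall>U G. U \<subseteq> pareto_front f X \<and>
            (\<exists>W. openin (top_of_set (pareto_front f X)) W \<and> y \<in> W \<and> W \<subseteq> U) \<and>
            {} \<subset> G \<and> G \<subset> (UNIV :: 'm set) \<longrightarrow>
            (\<exists>v\<in>U. dominates_on G v y \<and> dominates_on (UNIV - G) y v)"
proof (intro allI impI, elim conjE exE)
  fix U W and G :: "'m set"
  assume W: "openin (top_of_set (pareto_front f X)) W" "y \<in> W" "W \<subseteq> U"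
    and "{} \<subset> G" "G \<subset> UNIV"
  then obtain i\<^sub>0 i\<^sub>1 where "i\<^sub>0 \<in> G" "i\<^sub>1 \<notin> G" by blast
  have "card (UNIV - {i\<^sub>0}) = CARD('k)" using dim by (simp add: card_Diff_singleton)
  then obtain e :: "'k \<Rightarrow> 'm" where "range e = UNIV - {i\<^sub>0}"
    using finite_same_card_bij[of "UNIV :: 'k set" "UNIV - {i\<^sub>0}"] by (auto simp: bij_betw_def)
  hence e: "UNIV - {i\<^sub>0} \<subseteq> range e" by simp
  let ?\<psi> = "coords_mod_diagonal e i\<^sub>0"
  define \<delta> where "\<delta> t i = (if i \<in> G then 0 else t)" for t :: real and i :: 'm
  have "?\<psi> y \<in> interior (?\<psi> ` W)"
    by (rule manifold_interior_imp_interior_image[OF y continuous_on_coords_mod_diagonal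
          inj_on_coords_mod_diagonal_pareto_front[OF e] W(1,2)])
  then obtain t where "t > 0" "?\<psi> y + t *\<^sub>R (\<chi> j. \<delta> 1 (e j)) \<in> ?\<psi> ` W"
    by (rule interior_imp_ex_step)
  moreover have "(\<chi> j. \<delta> t (e j)) = t *\<^sub>R (\<chi> j. \<delta> 1 (e j))"
    by (simp add: \<delta>_def vec_eq_iff)
  ultimately obtain v where "v \<in> W" and \<psi>v: "?\<psi> v = ?\<psi> y + (\<chi> j. \<delta> t (e j))"
    by (metis imageE)
  have "v $ i = y $ i + (v $ i\<^sub>0 - y $ i\<^sub>0) + (if i \<in> G then 0 else t)" for i
    using coords_mod_diagonal_shift[OF e _ \<psi>v, of i] \<open>i\<^sub>0 \<in> G\<close> by (simp add: \<delta>_def)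
  moreover have "v \<in> pareto_front f X" "y \<in> pareto_front f X"
    using \<open>v \<in> W\<close> W(1,2) openin_imp_subset by blast+
  ultimately show "\<exists>v\<in>U. dominates_on G v y \<and> dominates_on (UNIV - G) y v"
    using pareto_front_diagonal_shift_dominates \<open>t > 0\<close> \<open>i\<^sub>0 \<in> G\<close> \<open>i\<^sub>1 \<notin> G\<close>
      \<open>v \<in> W\<close> W(3) by blast
qed

end
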